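(* Let $N\ge1$, $0<\lambda\le\Lambda$, assume $\beta=\frac{\Lambda}{\lambda}(N-1)+1>2$, and let $q>\frac{\beta}{\beta-2}$ and $\gamma>\frac{\beta}{\beta-1}$. Let $\delta$ satisfy $\max\{\frac{2}{q-1},\frac{2-\gamma}{\gamma-1}\}<\delta<\beta-2$. Then there exists $K_\delta>0$ such that $v(x)=K_\delta(1+|x|^2)^{-\delta/2}$ is a (positive, non-constant) classical solution of $$\mathcal{M}^+_{\lambda,\Lambda}(D^2v)\ge v^q+|Dv|^\gamma\quad\text{in }\mathbb{R}^N.$$
   Context: For $M\in\mathrm{Sym}_N$ with eigenvalues $e_1,\dots,e_N$, $\mathcal{M}^+_{\lambda,\Lambda}(M)=\sup_{\lambda I_N\le A\le\Lambda I_N}(-\mathrm{Tr}(AM))=-\lambda\sum_{e_k>0}e_k-\Lambda\sum_{e_k<0}e_k$. *)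

theory Defs
  imports "HOL-Analysis.Analysis"
begin

definition pucci_max :: "real \<Rightarrow> real \<Rightarrow> real^'n^'n \<Rightarrow> real" where
  "pucci_max l L M =
     (SUP A \<in> {A :: real^'n^'n. transpose A = A \<and>
                 (\<forall>\<xi>. l * (\<xi> \<bullet> \<xi>) \<le> \<xi> \<bullet> (A *v \<xi>) \<and> \<xi> \<bullet> (A *v \<xi>) \<le> L * (\<xi> \<bullet> \<xi>))}.
        - trace (A ** M))"

end

theory Submission
  imports Defs
begin

text \<open>Write \<open>s = 1 + |x|\<^sup>2\<close>.
  Testing the Pucci supremum with the matrix that has eigenvalue \<open>l\<close> in the direction of \<open>x\<close>
  and \<open>L\<close> across it gives \<open>\<M>\<^sup>+(D\<^sup>2v) \<ge> K\<delta> l (\<beta> - \<delta> - 2) s\<^bsup>-\<delta>/2-1\<^esup>\<close>, positive since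
  \<open>\<delta> < \<beta> - 2\<close>. The lower bounds on \<open>\<delta>\<close> make \<open>v\<^sup>q\<close> and \<open>|Dv|\<^sup>\<gamma>\<close> decay at least like
  \<open>s\<^bsup>-\<delta>/2-1\<^esup>\<close>, with constants \<open>K\<^sup>q\<close> and \<open>(K\<delta>)\<^sup>\<gamma>\<close>; as \<open>q, \<gamma> > 1\<close>, a small \<open>K\<close> makes
  them dominated by the Pucci term.\<close>

definition pucci_class :: "real \<Rightarrow> real \<Rightarrow> (real^'n^'n) set" where
  "pucci_class l L = {A. transpose A = A \<and>
     (\<forall>\<xi>. l * (\<xi> \<bullet> \<xi>) \<le> \<xi> \<bullet> (A *v \<xi>) \<and> \<xi> \<bullet> (A *v \<xi>) \<le> L * (\<xi> \<bullet> \<xi>))}"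

lemma pucci_max_eq_SUP: "pucci_max l L M = (SUP A \<in> pucci_class l L. - trace (A ** M))"
  by (simp add: pucci_max_def pucci_class_def)

lemma matrix_entry_eq_inner: "axis i 1 \<bullet> (A *v axis j 1) = (A :: real^'n^'n) $ i $ j"
  by (simp add: matrix_vector_mult_basis inner_axis' column_def)

lemma pucci_class_entry_bound:
  assumes "A \<in> pucci_class l L" and "0 \<le> l"
  shows "\<bar>A $ i $ j\<bar> \<le> L"
proof -
  have sym: "A $ j $ i = A $ i $ j"
    using assms(1) by (metis (mono_tags) mem_Collect_eq pucci_class_def transpose_def vec_lambda_beta)
  have bounds: "l * (\<xi> \<bullet> \<xi>) \<le> \<xi> \<bullet> (A *v \<xi>) \<and> \<xi> \<bullet> (A *v \<xi>) \<le> L * (\<xi> \<bullet> \<xi>)" for \<xi>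
    using assms(1) by (simp add: pucci_class_def)
  have diag: "l \<le> A $ k $ k \<and> A $ k $ k \<le> L" for k
    using bounds[of "axis k 1"] by (simp add: matrix_entry_eq_inner inner_axis_axis)
  show ?thesis
  proof (cases "i = j")
    case True
    then show ?thesis using diag[of i] assms(2) by auto
  next
    case False
    have norms: "(axis i 1 + axis j 1) \<bullet> (axis i 1 + axis j (1::real)) = 2"
      "(axis i 1 - axis j 1) \<bullet> (axis i 1 - axis j (1::real)) = 2"
      using False by (simp_all add: inner_add_left inner_add_right inner_diff_left
          inner_diff_right inner_axis_axis)
    have "(axis i 1 + axis j 1) \<bullet> (A *v (axis i 1 + axis j 1)) = A$i$i + A$j$j + 2 * A$i$j"
      by (simp add: matrix_vector_right_distrib inner_add_left inner_add_right
          matrix_entry_eq_inner sym)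
    then have "2 * l \<le> A$i$i + A$j$j + 2 * A$i$j"
      using bounds[of "axis i 1 + axis j 1"] norms by simp
    moreover have "(axis i 1 - axis j 1) \<bullet> (A *v (axis i 1 - axis j 1)) = A$i$i + A$j$j - 2 * A$i$j"
      by (simp add: matrix_vector_mult_diff_distrib inner_diff_left inner_diff_right
          matrix_entry_eq_inner sym)
    then have "2 * l \<le> A$i$i + A$j$j - 2 * A$i$j"
      using bounds[of "axis i 1 - axis j 1"] norms by simp
    ultimately show ?thesis using diag[of i] diag[of j] assms(2) by auto
  qed
qed

lemma neg_trace_mult_le_entrywise:
  fixes A M :: "real^'n^'n"
  assumes "\<And>i j. \<bar>A $ i $ j\<bar> \<le> L"
  shows "- trace (A ** M) \<le> (\<Sum>i\<in>UNIV. \<Sum>j\<in>UNIV. L * \<bar>M $ j $ i\<bar>)"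
proof -
  have "- trace (A ** M) \<le> \<bar>\<Sum>i\<in>UNIV. \<Sum>j\<in>UNIV. A $ i $ j * M $ j $ i\<bar>"
    by (simp add: trace_def matrix_matrix_mult_def)
  also have "\<dots> \<le> (\<Sum>i\<in>UNIV. \<Sum>j\<in>UNIV. \<bar>A $ i $ j * M $ j $ i\<bar>)"
    by (rule order_trans[OF sum_abs sum_mono[OF sum_abs]])
  also have "\<dots> \<le> (\<Sum>i\<in>UNIV. \<Sum>j\<in>UNIV. L * \<bar>M $ j $ i\<bar>)"
    by (intro sum_mono) (simp add: abs_mult assms mult_right_mono)
  finally show ?thesis .
qed

lemma pucci_max_ge:
  assumes "A \<in> pucci_class l L" and "0 \<le> l"
  shows "- trace (A ** M) \<le> pucci_max l L M"
  unfolding pucci_max_eq_SUP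
proof (rule cSUP_upper[OF assms(1)])
  show "bdd_above ((\<lambda>A. - trace (A ** M)) ` pucci_class l L)"
    by (rule bdd_aboveI2[where M = "\<Sum>i\<in>UNIV. \<Sum>j\<in>UNIV. L * \<bar>M $ j $ i\<bar>"])
       (use assms(2) in \<open>auto intro!: neg_trace_mult_le_entrywise pucci_class_entry_bound\<close>)
qed

definition rank_one_update :: "real \<Rightarrow> real \<Rightarrow> real^'n \<Rightarrow> real^'n^'n" where
  "rank_one_update a c u = (\<chi> i j. (if i = j then a else 0) + c * u $ i * u $ j)"

lemma transpose_rank_one_update: "transpose (rank_one_update a c u) = rank_one_update a c u"
  by (simp add: vec_eq_iff rank_one_update_def transpose_def mult.commute)

lemma rank_one_update_mult_vec:
  "rank_one_update a c u *v \<xi> = a *\<^sub>R \<xi> + (c * (u \<bullet> \<xi>)) *\<^sub>R u"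
proof -
  have "(\<Sum>j\<in>UNIV. ((if i = j then a else 0) + c * u $ i * u $ j) * \<xi> $ j)
      = a * \<xi> $ i + c * (u \<bullet> \<xi>) * u $ i" for i
  proof -
    have "(\<Sum>j\<in>UNIV. ((if i = j then a else 0) + c * u $ i * u $ j) * \<xi> $ j)
        = (\<Sum>j\<in>UNIV. if i = j then a * \<xi> $ j else 0) + (\<Sum>j\<in>UNIV. (c * u $ i) * (u $ j * \<xi> $ j))"
      unfolding sum.distrib[symmetric] by (rule sum.cong) (auto simp: algebra_simps)
    then show ?thesis
      by (simp add: inner_vec_def sum_distrib_left[symmetric])
  qed
  then show ?thesis
    by (simp add: vec_eq_iff rank_one_update_def matrix_vector_mult_def mult.commute)
qed

lemma trace_rank_one_update_mult:
  fixes u w :: "real^'n"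
  shows "trace (rank_one_update a c u ** rank_one_update b d w)
    = a * b * real CARD('n) + a * d * (w \<bullet> w) + c * b * (u \<bullet> u) + c * d * (u \<bullet> w)\<^sup>2"
proof -
  have diag: "(\<Sum>k\<in>UNIV. ((if i = k then a else 0) + c * u $ i * u $ k)
                     * ((if k = i then b else 0) + d * w $ k * w $ i))
     = a * b + a * d * w $ i * w $ i + c * b * u $ i * u $ i + c * d * (u \<bullet> w) * u $ i * w $ i"
    for i
  proof -
    have "(\<Sum>k\<in>UNIV. ((if i = k then a else 0) + c * u $ i * u $ k)
                   * ((if k = i then b else 0) + d * w $ k * w $ i))
      = (\<Sum>k\<in>UNIV. if i = k then a * b + a * d * w $ k * w $ i + c * b * u $ i * u $ k else 0)
        + (\<Sum>k\<in>UNIV. (c * d * u $ i * w $ i) * (u $ k * w $ k))"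
      unfolding sum.distrib[symmetric] by (rule sum.cong) (auto simp: algebra_simps)
    then show ?thesis
      by (simp add: inner_vec_def sum_distrib_left[symmetric])
  qed
  have "trace (rank_one_update a c u ** rank_one_update b d w) = (\<Sum>i\<in>UNIV.
      a * b + a * d * w $ i * w $ i + c * b * u $ i * u $ i + c * d * (u \<bullet> w) * u $ i * w $ i)"
    by (simp add: trace_def rank_one_update_def matrix_matrix_mult_def diag)
  then show ?thesis
    by (simp add: sum.distrib inner_vec_def sum_distrib_left[symmetric] power2_eq_square mult.assoc)
qed

lemma continuous_on_rank_one_update:
  assumes "continuous_on S a" and "continuous_on S c" and "continuous_on S u"
  shows "continuous_on S (\<lambda>x. rank_one_update (a x) (c x) (u x))"
  unfolding rank_one_update_def
proof (intro continuous_on_vec_lambda continuous_intros assms)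
  show "continuous_on S (\<lambda>x. if i = j then a x else 0)" for i j
    using assms(1) by (cases "i = j") auto
qed

text \<open>Ellipticity \<open>l\<close> along \<open>u\<close> and \<open>L\<close> across it: the maximizer for \<open>a I + c u u\<^sup>T\<close> with \<open>c \<ge> 0\<close>.\<close>

lemma rank_one_update_in_pucci_class:
  assumes "l \<le> L" and "norm u = 1"
  shows "rank_one_update L (l - L) u \<in> pucci_class l L"
proof -
  have "l * (\<xi> \<bullet> \<xi>) \<le> \<xi> \<bullet> (rank_one_update L (l - L) u *v \<xi>)
      \<and> \<xi> \<bullet> (rank_one_update L (l - L) u *v \<xi>) \<le> L * (\<xi> \<bullet> \<xi>)" for \<xi>
  proof -
    have quad: "\<xi> \<bullet> (rank_one_update L (l - L) u *v \<xi>) = L * (\<xi> \<bullet> \<xi>) - (L - l) * (u \<bullet> \<xi>)\<^sup>2"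
      by (simp add: rank_one_update_mult_vec inner_commute power2_eq_square algebra_simps)
    have "(u \<bullet> \<xi>)\<^sup>2 \<le> \<xi> \<bullet> \<xi>"
      using Cauchy_Schwarz_ineq[of u \<xi>] assms(2) by (simp add: norm_eq_1)
    then have "(L - l) * (u \<bullet> \<xi>)\<^sup>2 \<le> (L - l) * (\<xi> \<bullet> \<xi>)"
      using assms(1) by (intro mult_left_mono) auto
    moreover have "0 \<le> (L - l) * (u \<bullet> \<xi>)\<^sup>2"
      using assms(1) by simp
    ultimately show ?thesis
      unfolding quad using assms(1) by (simp add: algebra_simps)
  qed
  then show ?thesis
    by (simp add: pucci_class_def transpose_rank_one_update)
qed

lemma pucci_max_rank_one_update_ge:
  fixes x :: "real^'n"
  assumes "0 \<le> l" and "l \<le> L"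
  shows "- a * (L * (real CARD('n) - 1) + l) - l * c * (norm x)\<^sup>2
    \<le> pucci_max l L (rank_one_update a c x)"
proof -
  obtain u :: "real^'n" where u: "norm u = 1" "(u \<bullet> x)\<^sup>2 = (norm x)\<^sup>2"
  proof (cases "x = 0")
    case True
    then show ?thesis
      using that[of "axis undefined 1"] by simp
  next
    case False
    then have "sgn x \<bullet> x = norm x"
      by (simp add: sgn_div_norm dot_square_norm power2_eq_square)
    then show ?thesis
      using that[of "sgn x"] False by (simp add: norm_sgn)
  qed
  have "- trace (rank_one_update L (l - L) u ** rank_one_update a c x)
      = - a * (L * (real CARD('n) - 1) + l) - l * c * (norm x)\<^sup>2"
    using u by (simp add: trace_rank_one_update_mult power2_norm_eq_inner norm_eq_1 algebra_simps)
  moreover have "- trace (rank_one_update L (l - L) u ** rank_one_update a c x)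
      \<le> pucci_max l L (rank_one_update a c x)"
    using assms u by (intro pucci_max_ge rank_one_update_in_pucci_class)
  ultimately show ?thesis by simp
qed

definition radial_profile :: "real \<Rightarrow> real \<Rightarrow> real^'n \<Rightarrow> real" where
  "radial_profile K \<delta> x = K * (1 + (norm x)\<^sup>2) powr (- \<delta> / 2)"

definition radial_profile_grad :: "real \<Rightarrow> real \<Rightarrow> real^'n \<Rightarrow> real^'n" where
  "radial_profile_grad K \<delta> x = - (K * \<delta> * (1 + (norm x)\<^sup>2) powr (- \<delta> / 2 - 1)) *\<^sub>R x"

definition radial_profile_hess :: "real \<Rightarrow> real \<Rightarrow> real^'n \<Rightarrow> real^'n^'n" where
  "radial_profile_hess K \<delta> x =
     rank_one_update (- K * \<delta> * (1 + (norm x)\<^sup>2) powr (- \<delta> / 2 - 1))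
       (K * \<delta> * (\<delta> + 2) * (1 + (norm x)\<^sup>2) powr (- \<delta> / 2 - 2)) x"

lemma one_plus_norm_sq_pos: "0 < 1 + (norm x)\<^sup>2"
  by (simp add: add_pos_nonneg)

lemma radial_profile_pos: "0 < K \<Longrightarrow> 0 < radial_profile K \<delta> x"
  using one_plus_norm_sq_pos[of x] by (simp add: radial_profile_def)

lemma radial_profile_not_constant:
  assumes "K \<noteq> 0" and "\<delta> \<noteq> 0"
  shows "\<exists>x y. radial_profile K \<delta> x \<noteq> radial_profile K \<delta> y"
proof -
  have "radial_profile K \<delta> 0 \<noteq> radial_profile K \<delta> (axis undefined 1)"
    using assms by (simp add: radial_profile_def)
  then show ?thesis by blast
qed

lemma has_derivative_one_plus_norm_sq_powr:
  fixes x :: "'a :: real_inner"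
  shows "((\<lambda>x. (1 + (norm x)\<^sup>2) powr p) has_derivative
           (\<lambda>h. 2 * p * (1 + (norm x)\<^sup>2) powr (p - 1) * (x \<bullet> h))) (at x)"
proof -
  have pos: "0 < 1 + x \<bullet> x" by (simp add: add_pos_nonneg)
  have "((\<lambda>x. (1 + x \<bullet> x) powr p) has_derivative
     (\<lambda>h. (1 + x \<bullet> x) powr p * (0 * ln (1 + x \<bullet> x) + (0 + (x \<bullet> h + h \<bullet> x)) * p / (1 + x \<bullet> x)))) (at x)"
    by (intro derivative_intros pos) auto
  also have "(\<lambda>h. (1 + x \<bullet> x) powr p * (0 * ln (1 + x \<bullet> x) + (0 + (x \<bullet> h + h \<bullet> x)) * p / (1 + x \<bullet> x)))
      = (\<lambda>h. 2 * p * (1 + x \<bullet> x) powr (p - 1) * (x \<bullet> h))"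
    using pos by (auto simp: fun_eq_iff powr_diff inner_commute field_simps)
  finally show ?thesis by (simp add: power2_norm_eq_inner)
qed

lemma radial_profile_has_derivative:
  "(radial_profile K \<delta> has_derivative (\<lambda>h. radial_profile_grad K \<delta> x \<bullet> h)) (at x)"
proof -
  have "(radial_profile K \<delta> has_derivative
     (\<lambda>h. K * (2 * (- \<delta> / 2) * (1 + (norm x)\<^sup>2) powr (- \<delta> / 2 - 1) * (x \<bullet> h)))) (at x)"
    unfolding radial_profile_def[abs_def]
    by (intro has_derivative_mult_right has_derivative_one_plus_norm_sq_powr)
  then show ?thesis
    by (simp add: radial_profile_grad_def mult.assoc)
qed

lemma radial_profile_grad_has_derivative:
  fixes x :: "real^'n"
  shows "(radial_profile_grad K \<delta> has_derivative (\<lambda>h. radial_profile_hess K \<delta> x *v h)) (at x)"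
proof -
  define c where "c = (\<lambda>x :: real^'n. - K * \<delta> * (1 + (norm x)\<^sup>2) powr (- \<delta> / 2 - 1))"
  define c' where "c' = (\<lambda>h. K * \<delta> * (\<delta> + 2) * (1 + (norm x)\<^sup>2) powr (- \<delta> / 2 - 2) * (x \<bullet> h))"
  have "(c has_derivative
     (\<lambda>h. - K * \<delta> * (2 * (- \<delta> / 2 - 1) * (1 + (norm x)\<^sup>2) powr (- \<delta> / 2 - 1 - 1) * (x \<bullet> h)))) (at x)"
    unfolding c_def by (intro has_derivative_mult_right has_derivative_one_plus_norm_sq_powr)
  also have "(\<lambda>h. - K * \<delta> * (2 * (- \<delta> / 2 - 1) * (1 + (norm x)\<^sup>2) powr (- \<delta> / 2 - 1 - 1) * (x \<bullet> h)))
      = c'"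
    by (auto simp: fun_eq_iff c'_def algebra_simps)
  finally have "((\<lambda>x. c x *\<^sub>R x) has_derivative (\<lambda>h. c x *\<^sub>R h + c' h *\<^sub>R x)) (at x)"
    by (intro has_derivative_scaleR has_derivative_ident)
  moreover have "(\<lambda>x. c x *\<^sub>R x) = radial_profile_grad K \<delta>"
    by (auto simp: fun_eq_iff c_def radial_profile_grad_def)
  moreover have "(\<lambda>h. c x *\<^sub>R h + c' h *\<^sub>R x) = (\<lambda>h. radial_profile_hess K \<delta> x *v h)"
    by (auto simp: fun_eq_iff c_def c'_def radial_profile_hess_def rank_one_update_mult_vec
        algebra_simps)
  ultimately show ?thesis by simp
qed

lemma continuous_on_radial_profile_hess:
  fixes S :: "(real^'n) set"
  shows "continuous_on S (radial_profile_hess K \<delta>)"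
proof -
  have powr: "continuous_on S (\<lambda>x :: real^'n. (1 + (norm x)\<^sup>2) powr p)" for p
    by (intro continuous_on_powr continuous_intros) (metis one_plus_norm_sq_pos less_irrefl)
  show ?thesis
    unfolding radial_profile_hess_def[abs_def]
    by (intro continuous_on_rank_one_update continuous_intros powr)
qed

lemma pucci_max_radial_profile_hess_ge:
  fixes x :: "real^'n"
  assumes "0 < l" and "l \<le> L" and "0 \<le> K" and "0 \<le> \<delta>"
    and "\<beta> = L / l * (real CARD('n) - 1) + 1"
  shows "K * \<delta> * l * (\<beta> - \<delta> - 2) * (1 + (norm x)\<^sup>2) powr (- \<delta> / 2 - 1)
    \<le> pucci_max l L (radial_profile_hess K \<delta> x)"
proof -
  define s where "s = 1 + (norm x)\<^sup>2"
  have s: "0 < s" "(norm x)\<^sup>2 \<le> s"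
    using one_plus_norm_sq_pos[of x] by (simp_all add: s_def)
  have "(norm x)\<^sup>2 * s powr (- \<delta> / 2 - 2) \<le> s * s powr (- \<delta> / 2 - 2)"
    using s by (intro mult_right_mono) auto
  also have "\<dots> = s powr (- \<delta> / 2 - 1)"
    using s by (simp add: powr_mult_base) (smt (verit))
  finally have "l * (K * \<delta> * (\<delta> + 2)) * ((norm x)\<^sup>2 * s powr (- \<delta> / 2 - 2))
      \<le> l * (K * \<delta> * (\<delta> + 2)) * s powr (- \<delta> / 2 - 1)"
    using assms(1,3,4) by (intro mult_left_mono) auto
  moreover have "L * (real CARD('n) - 1) + l = l * \<beta>"
    using assms(1,5) by (simp add: field_simps)
  ultimately have "K * \<delta> * l * (\<beta> - \<delta> - 2) * s powr (- \<delta> / 2 - 1)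
      \<le> K * \<delta> * s powr (- \<delta> / 2 - 1) * (L * (real CARD('n) - 1) + l)
        - l * (K * \<delta> * (\<delta> + 2) * s powr (- \<delta> / 2 - 2)) * (norm x)\<^sup>2"
    by (simp add: algebra_simps)
  also have "\<dots> \<le> pucci_max l L (radial_profile_hess K \<delta> x)"
    using pucci_max_rank_one_update_ge[of l L "- K * \<delta> * s powr (- \<delta> / 2 - 1)"] assms(1,2)
    by (simp add: radial_profile_hess_def s_def)
  finally show ?thesis by (simp add: s_def)
qed

lemma radial_profile_powr_le:
  assumes "0 \<le> K" and "2 \<le> \<delta> * (q - 1)"
  shows "radial_profile K \<delta> x powr q \<le> K powr q * (1 + (norm x)\<^sup>2) powr (- \<delta> / 2 - 1)"
proof -
  have "radial_profile K \<delta> x powr q = K powr q * (1 + (norm x)\<^sup>2) powr (- \<delta> / 2 * q)"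
    using assms(1) one_plus_norm_sq_pos[of x]
    by (simp add: radial_profile_def powr_mult powr_powr)
  also have "\<dots> \<le> K powr q * (1 + (norm x)\<^sup>2) powr (- \<delta> / 2 - 1)"
    using assms(2) by (intro mult_left_mono powr_mono) (auto simp: algebra_simps)
  finally show ?thesis .
qed

lemma norm_radial_profile_grad_powr_le:
  assumes "0 \<le> K" and "0 \<le> \<delta>" and "2 - \<gamma> \<le> \<delta> * (\<gamma> - 1)"
  shows "norm (radial_profile_grad K \<delta> x) powr \<gamma>
    \<le> (K * \<delta>) powr \<gamma> * (1 + (norm x)\<^sup>2) powr (- \<delta> / 2 - 1)"
proof -
  define s where "s = 1 + (norm x)\<^sup>2"
  have s: "0 < s" "1 \<le> s"
    using one_plus_norm_sq_pos[of x] by (simp_all add: s_def)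
  have "\<gamma> \<ge> 1"
  proof (rule ccontr)
    assume "\<not> \<gamma> \<ge> 1"
    then have "\<delta> * (\<gamma> - 1) \<le> 0"
      using assms(2) by (simp add: mult_nonneg_nonpos)
    then show False
      using assms(3) \<open>\<not> \<gamma> \<ge> 1\<close> by linarith
  qed
  have "norm x \<le> s powr (1 / 2)"
    using s by (simp add: powr_half_sqrt s_def real_le_rsqrt)
  then have "norm (radial_profile_grad K \<delta> x) \<le> K * \<delta> * (s powr (- \<delta> / 2 - 1) * s powr (1 / 2))"
    using assms(1,2) by (simp add: radial_profile_grad_def s_def mult_left_mono mult.assoc)
  also have "\<dots> = K * \<delta> * s powr (- \<delta> / 2 - 1 / 2)"
    by (simp add: powr_add[symmetric]) (smt (verit))
  finally have "norm (radial_profile_grad K \<delta> x) powr \<gamma> \<le> (K * \<delta> * s powr (- \<delta> / 2 - 1 / 2)) powr \<gamma>"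
    using \<open>\<gamma> \<ge> 1\<close> by (intro powr_mono2) auto
  also have "\<dots> = (K * \<delta>) powr \<gamma> * s powr ((- \<delta> / 2 - 1 / 2) * \<gamma>)"
    using assms(1,2) s by (simp add: powr_mult powr_powr)
  also have "\<dots> \<le> (K * \<delta>) powr \<gamma> * s powr (- \<delta> / 2 - 1)"
    using assms(3) s by (intro mult_left_mono powr_mono) (auto simp: algebra_simps)
  finally show ?thesis by (simp add: s_def)
qed

lemma radial_profile_supersolution:
  fixes x :: "real^'n"
  assumes "0 < l" and "l \<le> L" and "0 < K" and "0 \<le> \<delta>"
    and "\<beta> = L / l * (real CARD('n) - 1) + 1"
    and "2 \<le> \<delta> * (q - 1)" and "2 - \<gamma> \<le> \<delta> * (\<gamma> - 1)"
    and "K powr (q - 1) + \<delta> powr \<gamma> * K powr (\<gamma> - 1) \<le> \<delta> * l * (\<beta> - \<delta> - 2)"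
  shows "radial_profile K \<delta> x powr q + norm (radial_profile_grad K \<delta> x) powr \<gamma>
    \<le> pucci_max l L (radial_profile_hess K \<delta> x)"
proof -
  define S where "S = (1 + (norm x)\<^sup>2) powr (- \<delta> / 2 - 1)"
  have "0 \<le> S" by (simp add: S_def)
  have "radial_profile K \<delta> x powr q + norm (radial_profile_grad K \<delta> x) powr \<gamma>
      \<le> (K powr q + (K * \<delta>) powr \<gamma>) * S"
    using radial_profile_powr_le[of K \<delta> q x] norm_radial_profile_grad_powr_le[of K \<delta> \<gamma> x]
      assms(3,4,6,7) by (simp add: S_def distrib_right)
  also have "\<dots> = K * (K powr (q - 1) + \<delta> powr \<gamma> * K powr (\<gamma> - 1)) * S"
    using assms(3,4) by (simp add: powr_mult powr_diff algebra_simps)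
  also have "\<dots> \<le> K * (\<delta> * l * (\<beta> - \<delta> - 2)) * S"
    using assms(3,8) \<open>0 \<le> S\<close> by (intro mult_right_mono mult_left_mono) auto
  also have "\<dots> \<le> pucci_max l L (radial_profile_hess K \<delta> x)"
    using pucci_max_radial_profile_hess_ge[of l L K \<delta> \<beta> x] assms(1-5)
    by (simp add: S_def mult.assoc mult.left_commute)
  finally show ?thesis .
qed

lemma exists_pos_powr_sum_le:
  fixes a b C D :: real
  assumes "0 < a" and "0 < b" and "0 < C" and "0 \<le> D"
  shows "\<exists>K>0. K powr a + D * K powr b \<le> C"
proof -
  define e where "e = min a b"
  define K where "K = min 1 ((C / (1 + D)) powr (1 / e))"
  have e: "0 < e" using assms by (simp add: e_def)
  have K: "0 < K" "K \<le> 1" using assms by (auto simp: K_def)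
  have "K powr e \<le> ((C / (1 + D)) powr (1 / e)) powr e"
    using K e by (intro powr_mono2) (auto simp: K_def)
  also have "\<dots> = C / (1 + D)"
    using e assms by (simp add: powr_powr)
  finally have Ke: "K powr e \<le> C / (1 + D)" .
  have "K powr a \<le> K powr e" and "K powr b \<le> K powr e"
    using K by (auto intro!: powr_mono' simp: e_def)
  then have "K powr a + D * K powr b \<le> (1 + D) * K powr e"
    using assms(4) by (simp add: distrib_right add_mono mult_left_mono)
  also have "\<dots> \<le> C"
    using Ke assms by (simp add: field_simps)
  finally show ?thesis using K by blast
qed

theorem mainTheorem5:
  fixes l L \<beta> q \<gamma> \<delta> :: real
  assumes "0 < l" and "l \<le> L"
    and "\<beta> = L / l * (real CARD('n) - 1) + 1" and "\<beta> > 2"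
    and "q > \<beta> / (\<beta> - 2)" and "\<gamma> > \<beta> / (\<beta> - 1)"
    and "max (2 / (q - 1)) ((2 - \<gamma>) / (\<gamma> - 1)) < \<delta>" and "\<delta> < \<beta> - 2"
  shows "\<exists>K > 0. let v = (\<lambda>x :: real^'n. K * (1 + (norm x)\<^sup>2) powr (- \<delta> / 2)) in
           (\<forall>x. v x > 0) \<and> (\<exists>x y. v x \<noteq> v y) \<and>
           (\<exists>Dv D2v. continuous_on UNIV D2v \<and>
              (\<forall>x. (v has_derivative (\<lambda>h. Dv x \<bullet> h)) (at x) \<and>
                   (Dv has_derivative (\<lambda>h. D2v x *v h)) (at x) \<and>
                   pucci_max l L (D2v x) \<ge> v x powr q + norm (Dv x) powr \<gamma>))"
proof -
  have "1 < \<beta> / (\<beta> - 2)" and "1 < \<beta> / (\<beta> - 1)"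
    using assms(4) by (simp_all add: field_simps)
  then have q: "1 < q" and \<gamma>: "1 < \<gamma>"
    using assms(5,6) by linarith+
  then have "2 < \<delta> * (q - 1)" and "2 - \<gamma> < \<delta> * (\<gamma> - 1)"
    using assms(7) by (simp_all add: pos_divide_less_eq)
  moreover from this(1) have "0 < \<delta>"
    using q by (smt (verit) mult_nonpos_nonneg)
  moreover obtain K where "0 < K"
    and "K powr (q - 1) + \<delta> powr \<gamma> * K powr (\<gamma> - 1) \<le> \<delta> * l * (\<beta> - \<delta> - 2)"
    using exists_pos_powr_sum_le[of "q - 1" "\<gamma> - 1" "\<delta> * l * (\<beta> - \<delta> - 2)" "\<delta> powr \<gamma>"]
      q \<gamma> \<open>0 < \<delta>\<close> assms(1,8) by auto
  ultimately show ?thesis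
    using radial_profile_pos[of K \<delta>] radial_profile_not_constant[of K \<delta>]
      radial_profile_has_derivative[of K \<delta>] radial_profile_grad_has_derivative[of K \<delta>]
      continuous_on_radial_profile_hess[of UNIV K \<delta>]
      radial_profile_supersolution[OF assms(1,2) _ _ assms(3), of K \<delta> q \<gamma>]
    unfolding Let_def radial_profile_def[abs_def]
    by (intro exI[of _ K] exI[of _ "radial_profile_grad K \<delta>"] exI[of _ "radial_profile_hess K \<delta>"]
        conjI allI) (auto simp del: One_nat_def)
qed

end
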